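(* Let $X$ be a compact Hausdorff space and let $Y$ be a real inner product space with inner product $\langle\cdot,\cdot\rangle$ and norm $\|y\|=\langle y,y\rangle^{1/2}$. Let $C(X,Y)$ be the space of continuous functions $X\to Y$ with the uniform norm $|||f|||=\max_{x\in X}\|f(x)\|$, let $H\subset C(X,Y)$ be a linear subspace of finite dimension $n\ge1$, let $A$ be a compact Hausdorff space, and let $\{f_a\}_{a\in A}\subset C(X,Y)$ be such that $a\mapsto f_a$ is continuous from $A$ into $C(X,Y)$. Then $f^*\in H$ satisfies $\max_{a\in A}|||f_a-f^*|||\le\max_{a\in A}|||f_a-f|||$ for all $f\in H$ if and only if there exist an integer $k$ with $1\le k\le n+1$, elements $a_1,\dots,a_k\in A$, points $x_1,\dots,x_k\in X$, and positive numbers $\lambda_1,\dots,\lambda_k$ with $\sum_{i=1}^k\lambda_i=1$ such that (i') $\sum_{i=1}^k\lambda_i\langle f_{a_i}(x_i)-f^*(x_i),\, f(x_i)\rangle = 0$ for all $f\in H$; and (ii) $\|f_{a_i}(x_i)-f^*(x_i)\| = |||f_{a_i}-f^*||| = \max_{a\in A}|||f_a-f^*|||$ for all $i$ with $1\le i\le k$. *)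

theory Defs
  imports "HOL-Analysis.Analysis"
begin

end

theory Submission
  imports Defs "HOL-Library.Poly_Mapping"
begin

text \<open>
  If \<open>f\<^sup>*\<close> is a best approximation, Kolmogorov's criterion holds: no \<open>g \<in> H\<close> has
  \<open>\<langle>f\<^sub>a(x) - f\<^sup>*(x), g(x)\<rangle> > 0\<close> at every extremal pair \<open>(a, x)\<close>, for otherwise
  \<open>f\<^sup>* + t g\<close> would be strictly better for small \<open>t > 0\<close>. Expressing the functional
  \<open>f \<mapsto> \<langle>f\<^sub>a(x) - f\<^sup>*(x), f(x)\<rangle>\<close> on \<open>H\<close> in the coordinates of a basis, the criterion says
  that \<open>0\<close> lies in the convex hull of the compact image of the extremal set in an
  \<open>n\<close>-dimensional inner product space, and Caratheodory's theorem picks at most \<open>n + 1\<close>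
  of its points. Conversely, for orthogonal weighted residuals \<open>e\<^sub>i\<close> of norm \<open>M\<close> and any
  \<open>f \<in> H\<close>, averaging \<open>\<parallel>e\<^sub>i + d\<^sub>i\<parallel>\<^sup>2 \<ge> M\<^sup>2 + 2\<langle>e\<^sub>i, d\<^sub>i\<rangle>\<close> with
  \<open>d\<^sub>i = (f\<^sup>* - f)(x\<^sub>i)\<close> shows that some residual of \<open>f\<close> has norm at least \<open>M\<close>.
\<close>

section \<open>Finitely supported functions as an inner product space\<close>

text \<open>
  Coordinates with respect to a basis \<open>B\<close> of \<open>H\<close> are taken in \<open>B \<Rightarrow>\<^sub>0 real\<close>: since \<open>n\<close>
  is a number and not a type, \<open>real ^ 'n\<close> is not available.
\<close>

instantiation poly_mapping :: (type, real_vector) real_vector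
begin

lift_definition scaleR_poly_mapping :: "real \<Rightarrow> ('a \<Rightarrow>\<^sub>0 'b) \<Rightarrow> 'a \<Rightarrow>\<^sub>0 'b"
  is "\<lambda>r f k. r *\<^sub>R f k"
  by (erule finite_subset[rotated]) auto

instance
  by standard (transfer; simp add: scaleR_add_right scaleR_add_left scaleR_diff_right)+

end

lemma lookup_scaleR [simp]: "Poly_Mapping.lookup (r *\<^sub>R f) k = r *\<^sub>R Poly_Mapping.lookup f k"
  by transfer simp

instantiation poly_mapping :: (type, real_inner) real_inner
begin

definition inner_poly_mapping :: "('a \<Rightarrow>\<^sub>0 'b) \<Rightarrow> ('a \<Rightarrow>\<^sub>0 'b) \<Rightarrow> real"
  where "inner_poly_mapping f g =
    (\<Sum>k\<in>Poly_Mapping.keys f. inner (Poly_Mapping.lookup f k) (Poly_Mapping.lookup g k))"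

definition norm_poly_mapping :: "('a \<Rightarrow>\<^sub>0 'b) \<Rightarrow> real"
  where "norm_poly_mapping f = sqrt (inner f f)"

definition sgn_poly_mapping :: "('a \<Rightarrow>\<^sub>0 'b) \<Rightarrow> 'a \<Rightarrow>\<^sub>0 'b"
  where "sgn_poly_mapping f = f /\<^sub>R norm f"

definition dist_poly_mapping :: "('a \<Rightarrow>\<^sub>0 'b) \<Rightarrow> ('a \<Rightarrow>\<^sub>0 'b) \<Rightarrow> real"
  where "dist_poly_mapping f g = norm (f - g)"

definition uniformity_poly_mapping :: "(('a \<Rightarrow>\<^sub>0 'b) \<times> ('a \<Rightarrow>\<^sub>0 'b)) filter"
  where "uniformity_poly_mapping = (INF e\<in>{0<..}. principal {(f, g). dist f g < e})"

definition open_poly_mapping :: "('a \<Rightarrow>\<^sub>0 'b) set \<Rightarrow> bool"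
  where "open_poly_mapping U = (\<forall>f\<in>U. \<forall>\<^sub>F (f', g) in uniformity. f' = f \<longrightarrow> g \<in> U)"

lemma inner_poly_mapping_eq_sum:
  fixes f g :: "'a \<Rightarrow>\<^sub>0 'b"
  assumes "finite K" "Poly_Mapping.keys f \<subseteq> K \<or> Poly_Mapping.keys g \<subseteq> K"
  shows "inner f g = (\<Sum>k\<in>K. inner (Poly_Mapping.lookup f k) (Poly_Mapping.lookup g k))"
proof -
  have "inner f g =
      (\<Sum>k\<in>Poly_Mapping.keys f \<union> K. inner (Poly_Mapping.lookup f k) (Poly_Mapping.lookup g k))"
    unfolding inner_poly_mapping_def
    by (rule sum.mono_neutral_left) (auto simp: assms in_keys_iff)
  also have "\<dots> = (\<Sum>k\<in>K. inner (Poly_Mapping.lookup f k) (Poly_Mapping.lookup g k))"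
    using assms by (intro sum.mono_neutral_right) (auto simp: in_keys_iff dest!: contra_subsetD)
  finally show ?thesis .
qed

instance
proof
  fix f g h :: "'a \<Rightarrow>\<^sub>0 'b" and r :: real
  let ?K = "Poly_Mapping.keys f \<union> Poly_Mapping.keys g \<union> Poly_Mapping.keys h"
  have sum_K: "inner u v = (\<Sum>k\<in>?K. inner (Poly_Mapping.lookup u k) (Poly_Mapping.lookup v k))"
    if "v \<in> {f, g, h}" for u v :: "'a \<Rightarrow>\<^sub>0 'b"
    using that by (intro inner_poly_mapping_eq_sum) auto
  show "inner f g = inner g f"
    by (simp add: sum_K inner_commute)
  show "inner (f + g) h = inner f h + inner g h"
    by (simp add: sum_K lookup_add inner_add_left sum.distrib)
  show "inner (r *\<^sub>R f) g = r * inner f g"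
    by (simp add: sum_K sum_distrib_left)
  show "0 \<le> inner f f"
    by (simp add: inner_poly_mapping_def sum_nonneg)
  show "inner f f = 0 \<longleftrightarrow> f = 0"
    by (auto simp: inner_poly_mapping_def sum_nonneg_eq_0_iff in_keys_iff intro!: poly_mapping_eqI)
  show "norm f = sqrt (inner f f)"
    by (simp add: norm_poly_mapping_def)
qed (simp_all add: sgn_poly_mapping_def dist_poly_mapping_def uniformity_poly_mapping_def
       open_poly_mapping_def)

end

lemma lookup_sum_single:
  "finite B \<Longrightarrow> Poly_Mapping.lookup (\<Sum>b\<in>B. Poly_Mapping.single b (c b)) k = (if k \<in> B then c k else 0)"
  by (simp add: lookup_sum lookup_single when_def)

lemma inner_sum_single:
  fixes c :: "'a \<Rightarrow> 'b::real_inner"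
  assumes "finite B"
  shows "inner y (\<Sum>b\<in>B. Poly_Mapping.single b (c b)) = (\<Sum>b\<in>B. inner (Poly_Mapping.lookup y b) (c b))"
proof -
  have "Poly_Mapping.keys (\<Sum>b\<in>B. Poly_Mapping.single b (c b)) \<subseteq> B"
    using assms by (auto simp: in_keys_iff lookup_sum_single split: if_splits)
  then show ?thesis
    using assms by (simp add: inner_poly_mapping_eq_sum[of B] lookup_sum_single)
qed

lemma single_real_eq_scaleR: "Poly_Mapping.single k (c::real) = c *\<^sub>R Poly_Mapping.single k 1"
  by (rule poly_mapping_eqI) (simp add: lookup_single when_def)

section \<open>Convex hulls in finite-dimensional subspaces\<close>

lemma affine_dependent_if_card_gt_span:
  fixes S :: "'a::real_vector set"
  assumes "finite B" "S \<subseteq> span B" "card B + 1 < card S"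
  shows "affine_dependent S"
proof -
  have "finite S" using assms(3) card.infinite by fastforce
  obtain a where a: "a \<in> S" using assms(3) by fastforce
  let ?T = "(\<lambda>x. x - a) ` (S - {a})"
  have "card ?T = card (S - {a})" by (simp add: card_image inj_on_def)
  then have "card B < card ?T" using assms(3) a \<open>finite S\<close> by simp
  moreover have "?T \<subseteq> span B" using assms(2) a by (auto intro: span_diff)
  ultimately have "dependent ?T" using independent_span_bound[OF assms(1)] by fastforce
  moreover have "?T = {x - a |x. x \<in> S - {a}}" by blast
  ultimately have "affine_dependent (insert a (S - {a}))"
    using dependent_imp_affine_dependent[of a "S - {a}"] by simp
  then show ?thesis using a by (simp add: insert_absorb)
qed

lemma affine_dependent_convex_weights_vanishing:
  fixes S :: "'a::real_vector set"
  assumes "finite S" "affine_dependent S" "\<forall>x\<in>S. 0 \<le> u x" "sum u S = 1"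
  obtains v a where "a \<in> S" "v a = 0" "\<forall>x\<in>S. 0 \<le> v x" "sum v S = 1"
    "(\<Sum>x\<in>S. v x *\<^sub>R x) = (\<Sum>x\<in>S. u x *\<^sub>R x)"
proof -
  obtain w where w: "sum w S = 0" "\<exists>x\<in>S. w x \<noteq> 0" "(\<Sum>x\<in>S. w x *\<^sub>R x) = 0"
    using assms(1,2) affine_dependent_explicit_finite by blast
  define N where "N = {x\<in>S. w x < 0}"
  have "N \<noteq> {}"
  proof
    assume "N = {}"
    then have "\<forall>x\<in>S. 0 \<le> w x" by (auto simp: N_def not_less)
    with w(1,2) assms(1) show False by (metis less_le sum_pos2)
  qed
  define t where "t = Min ((\<lambda>x. u x / - w x) ` N)"
  have "finite N" using assms(1) by (simp add: N_def)
  then have "t \<in> (\<lambda>x. u x / - w x) ` N"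
    unfolding t_def using \<open>N \<noteq> {}\<close> by (intro Min_in) auto
  then obtain a where a: "a \<in> N" "t = u a / - w a" by blast
  have t_le: "t * - w x \<le> u x" if "x \<in> N" for x
  proof -
    have "t \<le> u x / - w x" using \<open>finite N\<close> that unfolding t_def by simp
    with that show ?thesis by (simp add: N_def neg_le_minus_divide_eq)
  qed
  have "0 \<le> t" using a assms(3) by (simp add: N_def divide_nonneg_neg)
  show ?thesis
  proof
    show "a \<in> S" "(\<lambda>x. u x + t * w x) a = 0" using a by (auto simp: N_def)
    show "\<forall>x\<in>S. 0 \<le> u x + t * w x"
    proof
      fix x assume "x \<in> S"
      show "0 \<le> u x + t * w x"
      proof (cases "w x < 0")
        case True
        then have "t * - w x \<le> u x" using t_le \<open>x \<in> S\<close> by (simp add: N_def)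
        then show ?thesis by simp
      next
        case False
        then show ?thesis using \<open>0 \<le> t\<close> assms(3) \<open>x \<in> S\<close> by simp
      qed
    qed
    show "sum (\<lambda>x. u x + t * w x) S = 1"
      using w(1) assms(4) by (simp add: sum.distrib sum_distrib_left[symmetric])
    show "(\<Sum>x\<in>S. (u x + t * w x) *\<^sub>R x) = (\<Sum>x\<in>S. u x *\<^sub>R x)"
      using w(3) by (simp add: scaleR_add_left sum.distrib flip: scaleR_scaleR scaleR_sum_right)
  qed
qed

lemma caratheodory_span:
  fixes W :: "'a::real_vector set"
  assumes "finite B" "W \<subseteq> span B" "y \<in> convex hull W"
  obtains S u where "finite S" "S \<subseteq> W" "card S \<le> card B + 1" "\<forall>x\<in>S. 0 < u x" "sum u S = 1"
    "(\<Sum>x\<in>S. u x *\<^sub>R x) = y"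
proof -
  txt \<open>A representation of \<open>y\<close> with the fewest points has positive weights and an affinely
    independent support.\<close>
  define represents where "represents S \<longleftrightarrow> finite S \<and> S \<subseteq> W \<and>
    (\<exists>u. (\<forall>x\<in>S. 0 \<le> u x) \<and> sum u S = 1 \<and> (\<Sum>x\<in>S. u x *\<^sub>R x) = y)" for S
  obtain S0 where "represents S0"
    using assms(3) by (auto simp: convex_hull_explicit represents_def)
  then obtain S where "represents S" and minimal: "\<And>T. represents T \<Longrightarrow> card S \<le> card T"
    using ex_has_least_nat[of represents S0 card] by blast
  then obtain u where S: "finite S" "S \<subseteq> W" and u: "\<forall>x\<in>S. 0 \<le> u x" "sum u S = 1"
    "(\<Sum>x\<in>S. u x *\<^sub>R x) = y"
    unfolding represents_def by blast
  have no_zero_weight: False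
    if "a \<in> S" "v a = 0" "\<forall>x\<in>S. 0 \<le> v x" "sum v S = 1" "(\<Sum>x\<in>S. v x *\<^sub>R x) = y" for v a
  proof -
    have "represents (S - {a})"
      using that S unfolding represents_def
      by (intro conjI exI[of _ v]) (auto simp: sum_diff1 scaleR_sum_right)
    then have "card S \<le> card (S - {a})" by (rule minimal)
    with card_Diff1_less[OF S(1) \<open>a \<in> S\<close>] show False by linarith
  qed
  have "\<not> affine_dependent S"
  proof
    assume "affine_dependent S"
    then obtain v a where "a \<in> S" "v a = 0" "\<forall>x\<in>S. 0 \<le> v x" "sum v S = 1"
      "(\<Sum>x\<in>S. v x *\<^sub>R x) = (\<Sum>x\<in>S. u x *\<^sub>R x)"
      using affine_dependent_convex_weights_vanishing[OF S(1) _ u(1,2)] by blast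
    with u(3) no_zero_weight[of a v] show False by simp
  qed
  moreover have "S \<subseteq> span B" using S(2) assms(2) by blast
  ultimately have "card S \<le> card B + 1"
    using affine_dependent_if_card_gt_span[OF assms(1)] not_le by blast
  moreover have "0 < u x" if "x \<in> S" for x
    using no_zero_weight[OF that _ u] u(1) that by (auto simp: less_le)
  ultimately show ?thesis using that S u by blast
qed

primrec iterated_segments :: "'a::real_vector set \<Rightarrow> nat \<Rightarrow> 'a set" where
  "iterated_segments W 0 = W"
| "iterated_segments W (Suc m) =
    {(1 - u) *\<^sub>R x + u *\<^sub>R y | x y u. 0 \<le> u \<and> u \<le> 1 \<and> x \<in> iterated_segments W m \<and> y \<in> W}"

lemma compact_iterated_segments:
  fixes W :: "'a::real_normed_vector set"
  shows "compact W \<Longrightarrow> compact (iterated_segments W m)"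
  by (induction m) (simp_all add: compact_convex_combinations)

lemma iterated_segments_SucI:
  "x \<in> iterated_segments W m \<Longrightarrow> y \<in> W \<Longrightarrow> 0 \<le> u \<Longrightarrow> u \<le> 1 \<Longrightarrow>
    (1 - u) *\<^sub>R x + u *\<^sub>R y \<in> iterated_segments W (Suc m)"
  by auto

lemma subset_iterated_segments: "W \<subseteq> iterated_segments W m"
proof (induction m)
  case (Suc m)
  show ?case
  proof
    fix z assume "z \<in> W"
    then show "z \<in> iterated_segments W (Suc m)"
      using Suc.IH iterated_segments_SucI[of z W m z 0] by auto
  qed
qed simp

lemma iterated_segments_subset_convex_hull: "iterated_segments W m \<subseteq> convex hull W"
proof (induction m)
  case (Suc m)
  have "(1 - u) *\<^sub>R x + u *\<^sub>R y \<in> convex hull W"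
    if "0 \<le> u" "u \<le> 1" "x \<in> convex hull W" "y \<in> W" for x y u
    using that hull_subset[of W convex] by (intro convexD) auto
  with Suc.IH show ?case by auto
qed (simp add: hull_subset)

lemma convex_hull_subset_iterated_segments:
  assumes "finite S" "S \<noteq> {}" "S \<subseteq> W" "card S \<le> m + 1"
  shows "convex hull S \<subseteq> iterated_segments W m"
  using assms
proof (induction S arbitrary: m rule: finite_ne_induct)
  case (singleton x)
  then show ?case using subset_iterated_segments[of W m] by auto
next
  case (insert x F)
  then obtain m' where m: "m = Suc m'" "card F \<le> m' + 1"
    by (cases m) (auto simp: card_gt_0_iff Suc_le_eq)
  have F: "convex hull F \<subseteq> iterated_segments W m'"
    using insert m by auto
  show ?case
  proof
    fix z assume "z \<in> convex hull (insert x F)"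
    then obtain u v b where "0 \<le> u" "0 \<le> v" "u + v = 1" "b \<in> convex hull F"
        "z = u *\<^sub>R x + v *\<^sub>R b"
      using convex_hull_insert[OF \<open>F \<noteq> {}\<close>] by auto
    then have "z = (1 - u) *\<^sub>R b + u *\<^sub>R x" "u \<le> 1"
      by (auto simp: add.commute eq_diff_eq)
    then show "z \<in> iterated_segments W m"
      unfolding m using F insert.prems \<open>0 \<le> u\<close> \<open>b \<in> convex hull F\<close>
      by (auto intro!: iterated_segments_SucI)
  qed
qed

lemma compact_convex_hull_span:
  fixes W :: "'a::real_normed_vector set"
  assumes "compact W" "finite B" "W \<subseteq> span B"
  shows "compact (convex hull W)"
proof -
  have "convex hull W \<subseteq> iterated_segments W (card B)"
  proof
    fix y assume "y \<in> convex hull W"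
    then obtain S u where S: "finite S" "S \<subseteq> W" "card S \<le> card B + 1" "\<forall>x\<in>S. 0 < u x"
      "sum u S = 1" "(\<Sum>x\<in>S. u x *\<^sub>R x) = y"
      using caratheodory_span[OF assms(2,3)] by blast
    then have "y \<in> convex hull S"
      unfolding convex_hull_finite[OF S(1)] by (auto intro!: exI[of _ u] less_imp_le)
    moreover have "S \<noteq> {}" using S(5) by auto
    ultimately show "y \<in> iterated_segments W (card B)"
      using convex_hull_subset_iterated_segments[OF S(1) _ S(2,3)] by auto
  qed
  then have "convex hull W = iterated_segments W (card B)"
    using iterated_segments_subset_convex_hull by blast
  then show ?thesis using compact_iterated_segments[OF assms(1)] by simp
qed

lemma zero_in_convex_hull_if_no_separating_vector:
  fixes W :: "'a::real_inner set"
  assumes "compact W" "finite B" "W \<subseteq> span B" and no_separation: "\<And>y. \<exists>w\<in>W. inner y w \<le> 0"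
  shows "0 \<in> convex hull W"
proof (rule ccontr)
  assume zero_notin: "0 \<notin> convex hull W"
  have "compact (convex hull W)" using compact_convex_hull_span[OF assms(1-3)] .
  moreover have "convex hull W \<noteq> {}" using no_separation[of 0] by auto
  ultimately obtain y where y: "y \<in> convex hull W" "\<And>z. z \<in> convex hull W \<Longrightarrow> norm y \<le> norm z"
    using continuous_attains_inf[of "convex hull W" norm] by (auto intro: continuous_intros)
  obtain w where w: "w \<in> W" "inner y w \<le> 0" using no_separation by blast
  have "y \<noteq> 0" using y(1) zero_notin by auto
  then have "0 < inner y y" by simp
  moreover have "inner (0 - y) (w - y) = inner y y - inner y w" by (simp add: inner_diff_right)
  ultimately have "inner (0 - y) (w - y) > 0" using w(2) by linarith
  then obtain u where u: "0 < u" "u \<le> 1" "dist (y + u *\<^sub>R (w - y)) 0 < dist y 0"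
    using closer_point_lemma by blast
  have "y + u *\<^sub>R (w - y) = (1 - u) *\<^sub>R y + u *\<^sub>R w" by (simp add: algebra_simps)
  also have "\<dots> \<in> convex hull W"
    using y(1) w(1) u(1,2) hull_subset[of W convex] by (intro convexD) auto
  finally show False using y(2) u(3) by fastforce
qed

lemma apply_bcontfun_sum: "apply_bcontfun (\<Sum>i\<in>I. f i) x = (\<Sum>i\<in>I. apply_bcontfun (f i) x)"
  by (induction I rule: infinite_finite_induct) auto

lemma continuous_on_apply_bcontfun_family:
  fixes F :: "'a::t2_space \<Rightarrow> ('x::t2_space \<Rightarrow>\<^sub>C 'y::real_normed_vector)"
  assumes "continuous_on UNIV F"
  shows "continuous_on UNIV (\<lambda>p. apply_bcontfun (F (fst p)) (snd p))"
proof -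
  have "isCont (\<lambda>p. apply_bcontfun (F (fst p)) (snd p)) (a, x)" for a x
  proof -
    have "isCont F a" using assms by (simp add: continuous_on_eq_continuous_at)
    then have "((\<lambda>p. F (fst p)) \<longlongrightarrow> F a) (at (a, x))"
      by (rule isCont_tendsto_compose) (auto intro: tendsto_eq_intros)
    then have "((\<lambda>p. norm (F (fst p) - F a)) \<longlongrightarrow> 0) (at (a, x))"
      by (simp add: tendsto_norm_zero_iff LIM_zero_iff)
    then have "((\<lambda>p. apply_bcontfun (F (fst p) - F a) (snd p)) \<longlongrightarrow> 0) (at (a, x))"
      by (rule Lim_null_comparison[rotated])
        (simp add: norm_bounded flip: minus_bcontfun.rep_eq)
    moreover have "isCont (apply_bcontfun (F a)) x"
      using continuous_on_eq_continuous_at[of UNIV "apply_bcontfun (F a)"] by simp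
    then have "((\<lambda>p. apply_bcontfun (F a) (snd p)) \<longlongrightarrow> apply_bcontfun (F a) x) (at (a, x))"
      by (rule isCont_tendsto_compose) (auto intro: tendsto_eq_intros)
    ultimately show ?thesis
      unfolding isCont_def by (auto dest: tendsto_add)
  qed
  then show ?thesis by (auto simp: continuous_on_eq_continuous_at)
qed

lemma compact_uniformly_positive:
  fixes f :: "'a::topological_space \<Rightarrow> real"
  assumes "compact K" "continuous_on K f" "\<And>x. x \<in> K \<Longrightarrow> 0 < f x"
  obtains \<delta> where "0 < \<delta>" "\<And>x. x \<in> K \<Longrightarrow> \<delta> \<le> f x"
proof (cases "K = {}")
  case True
  show ?thesis by (rule that[of 1]) (simp_all add: True)
next
  case False
  obtain x0 where "x0 \<in> K" "\<And>x. x \<in> K \<Longrightarrow> f x0 \<le> f x"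
    using continuous_attains_inf[OF assms(1) False assms(2)] by blast
  with assms(3) show ?thesis by (intro that[of "f x0"]) auto
qed

lemma exists_small_positive:
  fixes a b c d :: real
  assumes "0 < b" "0 < d"
  obtains t where "0 < t" "t * a < b" "t * c < d"
proof -
  have lim: "((\<lambda>t. t * e) \<longlongrightarrow> 0) (at_right 0)" for e :: real
    by (auto intro!: tendsto_eq_intros)
  have "\<forall>\<^sub>F t in at_right 0. 0 < t \<and> t * a < b \<and> t * c < d"
    using assms by (intro eventually_conj eventually_at_right_less order_tendstoD(2)[OF lim])
  then have "\<exists>t. 0 < t \<and> t * a < b \<and> t * c < d"
    by (rule eventually_happens'[rotated]) simp
  with that show ?thesis by blast
qed

lemma norm_diff_scaleR_less:
  fixes e v :: "'a::real_inner"
  assumes "0 < t" "t * (norm v)\<^sup>2 < 2 * inner e v"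
  shows "norm (e - t *\<^sub>R v) < norm e"
proof -
  have "(norm (e - t *\<^sub>R v))\<^sup>2 = (norm e)\<^sup>2 - t * (2 * inner e v - t * (norm v)\<^sup>2)"
    by (simp add: power2_norm_eq_inner inner_diff_left inner_diff_right inner_commute algebra_simps)
  also have "\<dots> < (norm e)\<^sup>2" using assms by simp
  finally show ?thesis by (rule power2_less_imp_less) simp
qed

lemma norm_diff_scaleR_less_radius:
  fixes e v :: "'a::real_inner"
  assumes "norm e \<le> M" "norm v \<le> G" "0 < t"
    and "norm e + t * G < M \<or> t * G\<^sup>2 < 2 * inner e v"
  shows "norm (e - t *\<^sub>R v) < M"
  using assms(4)
proof
  assume "norm e + t * G < M"
  moreover have "norm (e - t *\<^sub>R v) \<le> norm e + t * norm v"
    using norm_triangle_ineq4[of e "t *\<^sub>R v"] assms(3) by simp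
  moreover have "t * norm v \<le> t * G" using assms(2,3) by simp
  ultimately show ?thesis by linarith
next
  assume "t * G\<^sup>2 < 2 * inner e v"
  moreover have "t * (norm v)\<^sup>2 \<le> t * G\<^sup>2"
    using assms(2,3) by (intro mult_left_mono power_mono) auto
  ultimately have "t * (norm v)\<^sup>2 < 2 * inner e v" by linarith
  then have "norm (e - t *\<^sub>R v) < norm e" by (rule norm_diff_scaleR_less[OF assms(3)])
  with assms(1) show ?thesis by linarith
qed

lemma exists_norm_add_ge_if_weighted_orthogonal:
  fixes e d :: "'i \<Rightarrow> 'a::real_inner"
  assumes "finite I" "\<forall>i\<in>I. 0 < lam i" "sum lam I = 1" "\<forall>i\<in>I. norm (e i) = M"
    and orthogonal: "(\<Sum>i\<in>I. lam i * inner (e i) (d i)) = 0"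
  shows "\<exists>i\<in>I. M \<le> norm (e i + d i)"
proof (rule ccontr)
  assume "\<not> ?thesis"
  then have less: "norm (e i + d i) < M" if "i \<in> I" for i
    using that by (simp add: not_le)
  have "I \<noteq> {}" using assms(3) by auto
  have "(\<Sum>i\<in>I. lam i * (M\<^sup>2 + 2 * inner (e i) (d i))) =
      M\<^sup>2 * sum lam I + 2 * (\<Sum>i\<in>I. lam i * inner (e i) (d i))"
    by (simp add: sum.distrib sum_distrib_left sum_distrib_right algebra_simps)
  then have "M\<^sup>2 = (\<Sum>i\<in>I. lam i * (M\<^sup>2 + 2 * inner (e i) (d i)))"
    using assms(3) orthogonal by simp
  also have "\<dots> \<le> (\<Sum>i\<in>I. lam i * (norm (e i + d i))\<^sup>2)"
  proof (intro sum_mono mult_left_mono)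
    fix i assume "i \<in> I"
    have "(norm (e i + d i))\<^sup>2 = (norm (e i))\<^sup>2 + 2 * inner (e i) (d i) + (norm (d i))\<^sup>2"
      by (simp add: power2_norm_eq_inner inner_add_left inner_add_right inner_commute)
    then show "M\<^sup>2 + 2 * inner (e i) (d i) \<le> (norm (e i + d i))\<^sup>2"
      using assms(4) \<open>i \<in> I\<close> by simp
    show "0 \<le> lam i" using assms(2) \<open>i \<in> I\<close> by (simp add: less_imp_le)
  qed
  also have "\<dots> < (\<Sum>i\<in>I. lam i * M\<^sup>2)"
    using assms(1,2) \<open>I \<noteq> {}\<close> less by (intro sum_strict_mono mult_strict_left_mono power_strict_mono) auto
  also have "\<dots> = M\<^sup>2" using assms(3) by (simp flip: sum_distrib_right)
  finally show False by simp
qed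

section \<open>Best uniform approximation of a compact family\<close>

locale compact_family =
  fixes fa :: "'a::t2_space \<Rightarrow> ('x::t2_space \<Rightarrow>\<^sub>C 'y::real_inner)"
  assumes compact_params: "compact (UNIV :: 'a set)"
    and compact_domain: "compact (UNIV :: 'x set)"
    and continuous_family: "continuous_on UNIV fa"
begin

definition deviation :: "('x \<Rightarrow>\<^sub>C 'y) \<Rightarrow> real" where
  "deviation g = (SUP a. norm (fa a - g))"

definition residual :: "('x \<Rightarrow>\<^sub>C 'y) \<Rightarrow> 'a \<times> 'x \<Rightarrow> 'y" where
  "residual g p = fa (fst p) (snd p) - g (snd p)"

definition extremal :: "('x \<Rightarrow>\<^sub>C 'y) \<Rightarrow> ('a \<times> 'x) set" where
  "extremal g = {p. norm (residual g p) = deviation g}"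

lemma compact_UNIV_points: "compact (UNIV :: ('a \<times> 'x) set)"
  using compact_Times[OF compact_params compact_domain] by simp

lemma continuous_on_residual: "continuous_on UNIV (residual g)"
  unfolding residual_def
  by (intro continuous_on_diff continuous_on_apply_bcontfun_family[OF continuous_family]
      continuous_on_compose2[OF continuous_on_apply_bcontfun continuous_on_snd]) auto

lemma norm_le_deviation: "norm (fa a - g) \<le> deviation g"
proof -
  have "continuous_on UNIV (\<lambda>a. norm (fa a - g))"
    by (intro continuous_intros continuous_family)
  then have "bdd_above (range (\<lambda>a. norm (fa a - g)))"
    using compact_params by (intro bounded_imp_bdd_above compact_imp_bounded compact_continuous_image)
  then show ?thesis unfolding deviation_def by (rule cSUP_upper[OF UNIV_I])
qed

lemma norm_residual_le: "norm (residual g p) \<le> norm (fa (fst p) - g)"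
  using norm_bounded[of "fa (fst p) - g" "snd p"] by (simp add: residual_def)

lemma norm_residual_le_deviation: "norm (residual g p) \<le> deviation g"
  using norm_residual_le norm_le_deviation order_trans by blast

lemma extremal_nonempty: "extremal g \<noteq> {}"
proof -
  have "continuous_on UNIV (\<lambda>p. norm (residual g p))"
    by (intro continuous_on_norm continuous_on_residual)
  then obtain p where p: "\<And>q. norm (residual g q) \<le> norm (residual g p)"
    using continuous_attains_sup[OF compact_UNIV_points] by blast
  have "norm (fa a - g) \<le> norm (residual g p)" for a
    using p[of "(a, _)"] by (intro norm_bound) (simp add: residual_def)
  then have "deviation g \<le> norm (residual g p)"
    unfolding deviation_def by (rule cSUP_least[OF UNIV_not_empty])
  then have "p \<in> extremal g"
    using norm_residual_le_deviation[of g p] by (simp add: extremal_def)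
  then show ?thesis by blast
qed

lemma deviation_less:
  assumes "\<And>p. norm (residual g p) < M"
  shows "deviation g < M"
proof -
  obtain p where "p \<in> extremal g" using extremal_nonempty by blast
  with assms[of p] show ?thesis by (simp add: extremal_def)
qed

lemma compact_extremal: "compact (extremal g)"
proof -
  have "closed (extremal g)"
    unfolding extremal_def
    by (intro closed_Collect_eq continuous_on_norm continuous_on_residual continuous_on_const)
  then show ?thesis using compact_UNIV_points by (metis compact_Int_closed inf_top.left_neutral)
qed

lemma extremal_norm_eq_deviation: "p \<in> extremal g \<Longrightarrow> norm (fa (fst p) - g) = deviation g"
  using norm_residual_le[of g p] norm_le_deviation[of "fst p" g] by (simp add: extremal_def)

lemma residual_add_scaleR: "residual (g + t *\<^sub>R h) p = residual g p - t *\<^sub>R h (snd p)"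
  by (simp add: residual_def algebra_simps)

lemma deviation_decreases:
  fixes h :: "'x \<Rightarrow>\<^sub>C 'y"
  assumes descent: "\<And>p. p \<in> extremal g \<Longrightarrow> 0 < inner (residual g p) (h (snd p))"
  shows "\<exists>t. deviation (g + t *\<^sub>R h) < deviation g"
proof -
  define M where "M = deviation g"
  define slope where "slope p = inner (residual g p) (h (snd p))" for p
  have continuous_slope: "continuous_on UNIV slope"
    unfolding slope_def
    by (intro continuous_on_inner continuous_on_residual
        continuous_on_compose2[OF continuous_on_apply_bcontfun continuous_on_snd]) auto
  txt \<open>On the compact set \<open>flat\<close> the residual stays uniformly below \<open>M\<close>; off it, \<open>h\<close> points
    uniformly inwards. A small step \<open>t\<close> therefore lowers every residual below \<open>M\<close>.\<close>
  have "0 < slope p" if "p \<in> extremal g" for p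
    using descent[OF that] by (simp add: slope_def)
  then obtain \<delta> where "0 < \<delta>" and \<delta>: "\<And>p. p \<in> extremal g \<Longrightarrow> \<delta> \<le> slope p"
    by (rule compact_uniformly_positive[OF compact_extremal continuous_on_subset[OF continuous_slope],
          rotated]) auto
  define flat where "flat = {p. slope p \<le> \<delta> / 2}"
  have "closed flat"
    unfolding flat_def by (intro closed_Collect_le continuous_slope continuous_on_const)
  then have "compact flat" using compact_UNIV_points by (metis compact_Int_closed inf_top.left_neutral)
  moreover have "continuous_on flat (\<lambda>p. M - norm (residual g p))"
    by (intro continuous_intros continuous_on_subset[OF continuous_on_residual]) auto
  moreover have "0 < M - norm (residual g p)" if "p \<in> flat" for p
  proof -
    have "p \<notin> extremal g" using \<delta>[of p] that \<open>0 < \<delta>\<close> by (auto simp: flat_def)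
    then show ?thesis using norm_residual_le_deviation[of g p] by (simp add: extremal_def M_def)
  qed
  ultimately obtain \<epsilon> where "0 < \<epsilon>" and \<epsilon>: "\<And>p. p \<in> flat \<Longrightarrow> \<epsilon> \<le> M - norm (residual g p)"
    by (rule compact_uniformly_positive) auto
  obtain t where "0 < t" "t * norm h < \<epsilon>" "t * (norm h)\<^sup>2 < \<delta>"
    using exists_small_positive[OF \<open>0 < \<epsilon>\<close> \<open>0 < \<delta>\<close>] by blast
  have "norm (residual g p - t *\<^sub>R h (snd p)) < M" for p
  proof (rule norm_diff_scaleR_less_radius)
    show "norm (residual g p) \<le> M" unfolding M_def by (rule norm_residual_le_deviation)
    show "norm (h (snd p)) \<le> norm h" by (rule norm_bounded)
    show "norm (residual g p) + t * norm h < M \<or> t * (norm h)\<^sup>2 < 2 * inner (residual g p) (h (snd p))"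
      using \<epsilon>[of p] \<open>t * norm h < \<epsilon>\<close> \<open>t * (norm h)\<^sup>2 < \<delta>\<close> by (auto simp: flat_def slope_def)
  qed fact
  then have "deviation (g + t *\<^sub>R h) < M" by (intro deviation_less) (simp add: residual_add_scaleR)
  then show ?thesis unfolding M_def by blast
qed

lemma kolmogorov_criterion:
  fixes h :: "'x \<Rightarrow>\<^sub>C 'y"
  assumes "subspace H" "g \<in> H" "h \<in> H" and optimal: "\<forall>f\<in>H. deviation g \<le> deviation f"
  shows "\<exists>p\<in>extremal g. inner (residual g p) (h (snd p)) \<le> 0"
proof (rule ccontr)
  assume "\<not> ?thesis"
  then obtain t where "deviation (g + t *\<^sub>R h) < deviation g"
    using deviation_decreases[of g h] by (force simp: not_le)
  moreover have "g + t *\<^sub>R h \<in> H" using assms(1-3) by (intro subspace_add subspace_scale)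
  ultimately show False using optimal by fastforce
qed


definition coordinates :: "('x \<Rightarrow>\<^sub>C 'y) set \<Rightarrow> ('x \<Rightarrow>\<^sub>C 'y) \<Rightarrow> 'a \<times> 'x \<Rightarrow> ('x \<Rightarrow>\<^sub>C 'y) \<Rightarrow>\<^sub>0 real"
  where "coordinates B g p =
    (\<Sum>b\<in>B. Poly_Mapping.single b (inner (residual g p) (apply_bcontfun b (snd p))))"

lemma inner_coordinates:
  fixes B :: "('x \<Rightarrow>\<^sub>C 'y) set"
  assumes "finite B"
  shows "inner y (coordinates B g p) =
    inner (residual g p) ((\<Sum>b\<in>B. Poly_Mapping.lookup y b *\<^sub>R b) (snd p))"
  unfolding coordinates_def inner_sum_single[OF assms]
  by (simp add: apply_bcontfun_sum inner_sum_right)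

lemma continuous_on_coordinates: "continuous_on UNIV (coordinates B g)"
  unfolding coordinates_def single_real_eq_scaleR[of _ "inner _ _"]
  by (intro continuous_intros continuous_on_residual
      continuous_on_compose2[OF continuous_on_apply_bcontfun continuous_on_snd]) auto

lemma coordinates_in_span: "coordinates B g p \<in> span ((\<lambda>b. Poly_Mapping.single b 1) ` B)"
  unfolding coordinates_def single_real_eq_scaleR[of _ "inner _ _"]
  by (intro span_sum span_scale span_base) auto

lemma optimal_imp_zero_in_convex_hull_coordinates:
  fixes H :: "('x \<Rightarrow>\<^sub>C 'y) set"
  assumes "subspace H" "finite B" "B \<subseteq> H" "g \<in> H" "\<forall>f\<in>H. deviation g \<le> deviation f"
  shows "0 \<in> convex hull (coordinates B g ` extremal g)"
proof (rule zero_in_convex_hull_if_no_separating_vector)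
  show "compact (coordinates B g ` extremal g)"
    by (intro compact_continuous_image continuous_on_subset[OF continuous_on_coordinates]
        compact_extremal) auto
  show "finite ((\<lambda>b. Poly_Mapping.single b (1::real)) ` B)" using assms(2) by simp
  show "coordinates B g ` extremal g \<subseteq> span ((\<lambda>b. Poly_Mapping.single b 1) ` B)"
    using coordinates_in_span by blast
  fix y
  have "(\<Sum>b\<in>B. Poly_Mapping.lookup y b *\<^sub>R b) \<in> H"
    using assms(1,3) by (intro subspace_sum subspace_scale) auto
  then obtain p where "p \<in> extremal g"
    "inner (residual g p) ((\<Sum>b\<in>B. Poly_Mapping.lookup y b *\<^sub>R b) (snd p)) \<le> 0"
    using kolmogorov_criterion assms(1,4,5) by blast
  then show "\<exists>w\<in>coordinates B g ` extremal g. inner y w \<le> 0"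
    using inner_coordinates[OF assms(2)] by auto
qed

lemma optimal_imp_orthogonal_extremal_points:
  fixes H :: "('x \<Rightarrow>\<^sub>C 'y) set"
  assumes "subspace H" "finite B" "B \<subseteq> H" "H \<subseteq> span B" "g \<in> H"
    and optimal: "\<forall>f\<in>H. deviation g \<le> deviation f"
  obtains P u where "finite P" "P \<subseteq> extremal g" "card P \<le> card B + 1" "\<forall>p\<in>P. 0 < u p"
    "sum u P = 1" "\<forall>f\<in>H. (\<Sum>p\<in>P. u p * inner (residual g p) (f (snd p))) = 0"
proof -
  let ?U = "(\<lambda>b. Poly_Mapping.single b (1::real)) ` B"
  have "finite ?U" using assms(2) by simp
  moreover have "coordinates B g ` extremal g \<subseteq> span ?U" using coordinates_in_span by blast
  moreover have "0 \<in> convex hull (coordinates B g ` extremal g)"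
    using optimal_imp_zero_in_convex_hull_coordinates[OF assms(1-3,5) optimal] .
  ultimately obtain S w where S: "finite S" "S \<subseteq> coordinates B g ` extremal g" "card S \<le> card ?U + 1"
    "\<forall>v\<in>S. 0 < w v" "sum w S = 1" "(\<Sum>v\<in>S. w v *\<^sub>R v) = 0"
    by (rule caratheodory_span)
  from S(2) obtain P where P: "P \<subseteq> extremal g" "inj_on (coordinates B g) P" "S = coordinates B g ` P"
    unfolding subset_image_inj by blast
  define u where "u p = w (coordinates B g p)" for p
  have reindex: "sum f S = (\<Sum>p\<in>P. f (coordinates B g p))" for f :: "_ \<Rightarrow> 'b::comm_monoid_add"
    using P(2,3) by (simp add: sum.reindex)
  have "finite P" using S(1) P(2,3) by (simp add: finite_image_iff)
  moreover have "card P \<le> card B + 1"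
  proof -
    have "card S = card P" using P(2,3) by (simp add: card_image)
    moreover have "card ?U \<le> card B" by (rule card_image_le[OF assms(2)])
    ultimately show ?thesis using S(3) by linarith
  qed
  moreover have "\<forall>p\<in>P. 0 < u p" using S(4) P(3) by (simp add: u_def)
  moreover have "sum u P = 1" using S(5) by (simp add: reindex u_def)
  moreover have "\<forall>f\<in>H. (\<Sum>p\<in>P. u p * inner (residual g p) (f (snd p))) = 0"
  proof
    fix f assume "f \<in> H"
    then obtain c where f: "f = (\<Sum>b\<in>B. c b *\<^sub>R b)"
      using assms(4) span_finite[OF assms(2)] by auto
    define y where "y = (\<Sum>b\<in>B. Poly_Mapping.single b (c b))"
    have "f = (\<Sum>b\<in>B. Poly_Mapping.lookup y b *\<^sub>R b)"
      unfolding f y_def using assms(2) by (intro sum.cong) (auto simp: lookup_sum_single)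
    then have "(\<Sum>p\<in>P. u p * inner (residual g p) (f (snd p))) =
        inner y (\<Sum>p\<in>P. u p *\<^sub>R coordinates B g p)"
      using inner_coordinates[OF assms(2)] by (simp add: inner_sum_right)
    also have "\<dots> = 0" using S(6) by (simp add: reindex u_def)
    finally show "(\<Sum>p\<in>P. u p * inner (residual g p) (f (snd p))) = 0" .
  qed
  ultimately show ?thesis using P(1) that by blast
qed

lemma orthogonal_extremal_points_imp_optimal:
  fixes H :: "('x \<Rightarrow>\<^sub>C 'y) set"
  assumes "subspace H" "g \<in> H" "f \<in> H" "finite I" "\<forall>i\<in>I. 0 < lam i" "sum lam I = 1"
    "\<forall>i\<in>I. p i \<in> extremal g"
    and orthogonal: "\<forall>f\<in>H. (\<Sum>i\<in>I. lam i * inner (residual g (p i)) (f (snd (p i)))) = 0"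
  shows "deviation g \<le> deviation f"
proof -
  have "g - f \<in> H" using assms(1-3) by (rule subspace_diff)
  then have "\<exists>i\<in>I. deviation g \<le> norm (residual g (p i) + (g - f) (snd (p i)))"
    using assms(4-7) orthogonal
    by (intro exists_norm_add_ge_if_weighted_orthogonal) (auto simp: extremal_def)
  then obtain i where le: "deviation g \<le> norm (residual g (p i) + (g - f) (snd (p i)))" ..
  have "residual g (p i) + (g - f) (snd (p i)) = residual f (p i)"
    by (simp add: residual_def)
  with le have "deviation g \<le> norm (residual f (p i))" by simp
  also have "\<dots> \<le> deviation f" by (rule norm_residual_le_deviation)
  finally show ?thesis .
qed

lemma optimal_iff_orthogonal_extremal_points:
  fixes H :: "('x \<Rightarrow>\<^sub>C 'y) set"
  assumes "subspace H" "finite B" "B \<subseteq> H" "H \<subseteq> span B" "g \<in> H"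
  shows "(\<forall>f\<in>H. deviation g \<le> deviation f) \<longleftrightarrow>
    (\<exists>k::nat. 1 \<le> k \<and> k \<le> card B + 1 \<and>
      (\<exists>as xs lam. (\<forall>i\<in>{1..k}. 0 < lam i) \<and> (\<Sum>i=1..k. lam i) = 1 \<and>
        (\<forall>f\<in>H. (\<Sum>i=1..k. lam i * inner (residual g (as i, xs i)) (f (xs i))) = 0) \<and>
        (\<forall>i\<in>{1..k}. norm (residual g (as i, xs i)) = norm (fa (as i) - g) \<and>
          norm (fa (as i) - g) = deviation g)))"
    (is "?optimal \<longleftrightarrow> ?characterized")
proof
  assume ?optimal
  then obtain P u where P: "finite P" "P \<subseteq> extremal g" "card P \<le> card B + 1" "\<forall>p\<in>P. 0 < u p"
    "sum u P = 1" "\<forall>f\<in>H. (\<Sum>p\<in>P. u p * inner (residual g p) (f (snd p))) = 0"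
    using optimal_imp_orthogonal_extremal_points[OF assms] by blast
  obtain h where h: "bij_betw h {1..card P} P"
    using ex_bij_betw_nat_finite_1[OF P(1)] by blast
  have h_extremal: "norm (residual g (h i)) = deviation g \<and> norm (fa (fst (h i)) - g) = deviation g"
    if "i \<in> {1..card P}" for i
  proof -
    have "h i \<in> extremal g" using bij_betwE[OF h] that P(2) by blast
    then show ?thesis by (simp add: extremal_def extremal_norm_eq_deviation)
  qed
  have reindex: "(\<Sum>i=1..card P. F (h i)) = sum F P" for F :: "_ \<Rightarrow> real"
    using sum.reindex_bij_betw[OF h] .
  have sum_one: "(\<Sum>i=1..card P. u (h i)) = 1"
    using P(5) reindex[of u] by simp
  have orthogonal: "(\<Sum>i=1..card P. u (h i) * inner (residual g (h i)) (f (snd (h i)))) = 0"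
    if "f \<in> H" for f
    using P(6) that reindex[of "\<lambda>p. u p * inner (residual g p) (f (snd p))"] by simp
  show ?characterized
  proof (intro exI[of _ "card P"] exI[of _ "fst \<circ> h"] exI[of _ "snd \<circ> h"] exI[of _ "u \<circ> h"] conjI)
    show "1 \<le> card P" using P(1,5) by (auto simp: Suc_le_eq card_gt_0_iff)
  qed (use P(3,4) bij_betwE[OF h] h_extremal sum_one orthogonal in auto)
next
  assume ?characterized
  then obtain k :: nat and as xs lam where "\<forall>i\<in>{1..k}. 0 < lam i" "(\<Sum>i=1..k. lam i) = 1"
    "\<forall>f\<in>H. (\<Sum>i=1..k. lam i * inner (residual g (as i, xs i)) (f (xs i))) = 0"
    "\<forall>i\<in>{1..k}. norm (residual g (as i, xs i)) = norm (fa (as i) - g) \<and>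
      norm (fa (as i) - g) = deviation g"
    by blast
  then show ?optimal
    using orthogonal_extremal_points_imp_optimal[OF assms(1,5) _ finite_atLeastAtMost,
        where lam = lam and p = "\<lambda>i. (as i, xs i)"]
    by (auto simp: extremal_def)
qed

end

theorem corollary3:
  fixes H :: "('x::t2_space \<Rightarrow>\<^sub>C 'y::real_inner) set"
    and fa :: "'a::t2_space \<Rightarrow> ('x \<Rightarrow>\<^sub>C 'y)"
    and fstar :: "'x \<Rightarrow>\<^sub>C 'y"
    and n :: nat
  assumes "compact (UNIV :: 'x set)"
    and "compact (UNIV :: 'a set)"
    and "subspace H" and "dim H = n" and "n \<ge> 1"
    and "continuous_on UNIV fa"
    and "fstar \<in> H"
  shows "(\<forall>f\<in>H. (SUP a. norm (fa a - fstar)) \<le> (SUP a. norm (fa a - f)))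
     \<longleftrightarrow>
     (\<exists>k::nat. 1 \<le> k \<and> k \<le> n + 1 \<and>
       (\<exists>as :: nat \<Rightarrow> 'a. \<exists>xs :: nat \<Rightarrow> 'x. \<exists>lam :: nat \<Rightarrow> real.
          (\<forall>i\<in>{1..k}. lam i > 0) \<and> (\<Sum>i=1..k. lam i) = 1 \<and>
          (\<forall>f\<in>H. (\<Sum>i=1..k. lam i *
              inner (apply_bcontfun (fa (as i)) (xs i) - apply_bcontfun fstar (xs i))
                    (apply_bcontfun f (xs i))) = 0) \<and>
          (\<forall>i\<in>{1..k}.
              norm (apply_bcontfun (fa (as i)) (xs i) - apply_bcontfun fstar (xs i))
                = norm (fa (as i) - fstar) \<and>
              norm (fa (as i) - fstar) = (SUP a. norm (fa a - fstar)))))"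
proof -
  interpret compact_family fa
    using assms(1,2,6) by unfold_locales
  obtain B where B: "B \<subseteq> H" "H \<subseteq> span B" "card B = n"
    using basis_exists[of H] unfolding assms(4) by blast
  txt \<open>The dimension of an infinite-dimensional space is \<open>0\<close>, so \<open>n \<ge> 1\<close> is what makes
    \<open>H\<close> finite-dimensional.\<close>
  have "finite B"
    using B(3) assms(5) card.infinite by fastforce
  show ?thesis
    using optimal_iff_orthogonal_extremal_points[OF assms(3) \<open>finite B\<close> B(1,2) assms(7)]
    by (simp add: deviation_def residual_def B(3))
qed

end
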